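(* Let $L>0$, $D>0$, $\alpha\in[0,1]$, $\tau_{\rm acc}>0$, $\tau_{\rm m}>0$, $h_{\rm m}>0$, $\bar h_{\rm acc}>0$, and let $\tau_{\rm mix}$, $\bar h_{\rm mix}$, $\bar\rho$, $\bar v$ and $c_1,c_2,c_3,c_4$ be as defined in the context (with $\bar\rho,\bar v>0$). Consider, for $x\in[0,D]$, $t\ge0$, the open-loop system (i.e. with $\tilde h_{\rm acc}\equiv 0$) $$\tilde z_t(x,t)+\bar v\,\tilde z_x(x,t)=0,\qquad \tilde v_t(x,t)-c_4\tilde v_x(x,t)=-c_1e^{-\frac{c_2x}{\bar v}}\tilde z(x,t),$$ $$\tilde z(0,t)=-L\frac{\bar\rho^2}{\bar v}\tilde v(0,t),\qquad \tilde v_t(D,t)=-c_1e^{-\frac{c_2D}{\bar v}}\tilde z(D,t).$$ This system is exponentially unstable: there exist a real number $\sigma>0$ and a nontrivial pair of functions $(\phi,\psi)$ on $[0,D]$ such that $\tilde z(x,t)=e^{\sigma t}\phi(x)$, $\tilde v(x,t)=e^{\sigma t}\psi(x)$ is a solution.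
   Context: Definitions: $\tau_{\rm mix}=\left(\frac{\alpha}{\tau_{\rm acc}}+\frac{1-\alpha}{\tau_{\rm m}}\right)^{-1}$; $\bar h_{\rm mix}=\frac{\alpha+(1-\alpha)\frac{\tau_{\rm acc}}{\tau_{\rm m}}}{\alpha+(1-\alpha)\frac{\tau_{\rm acc}}{\tau_{\rm m}}\frac{\bar h_{\rm acc}}{h_{\rm m}}}\bar h_{\rm acc}$. Given a constant inflow $q_{\rm in}>0$ with $q_{\rm in}\bar h_{\rm mix}<1$, the equilibrium values are $\bar v=\frac{L}{\frac{1}{q_{\rm in}}-\bar h_{\rm mix}}$ and $\bar\rho=\frac{q_{\rm in}}{\bar v}$, so that $\bar v=q_{\rm in}/\bar\rho$ and $\frac1{\bar\rho}-L=\bar h_{\rm mix}\bar v$. Constants: $c_1=\frac{1}{\bar\rho^2\tau_{\rm mix}\bar h_{\rm mix}}$, $c_2=\frac{1}{\tau_{\rm mix}}$, $c_3=\frac{\alpha}{\tau_{\rm acc}\bar h_{\rm acc}^2}\left(\frac1{\bar\rho}-L\right)$, $c_4=\frac{L}{\bar h_{\rm mix}}$. (This system is the diagonalized linearization, around a uniform congested equilibrium, of an Aw–Rascle–Zhang-type traffic model in which $\tilde h_{\rm acc}$ is the deviation of the time-gap of ACC-equipped vehicles; $\tilde z=e^{c_2x/\bar v}(\tilde\rho+\bar h_{\rm mix}\bar\rho^2\tilde v)$.) *)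

theory Defs
  imports "HOL-Analysis.Analysis"
begin

definition tau_mix :: "real \<Rightarrow> real \<Rightarrow> real \<Rightarrow> real" where
  "tau_mix \<alpha> \<tau>acc \<tau>m = inverse (\<alpha> / \<tau>acc + (1 - \<alpha>) / \<tau>m)"

definition h_mix :: "real \<Rightarrow> real \<Rightarrow> real \<Rightarrow> real \<Rightarrow> real \<Rightarrow> real" where
  "h_mix \<alpha> \<tau>acc \<tau>m hm hacc =
     (\<alpha> + (1 - \<alpha>) * (\<tau>acc / \<tau>m)) /
     (\<alpha> + (1 - \<alpha>) * (\<tau>acc / \<tau>m) * (hacc / hm)) * hacc"

definition v_bar :: "real \<Rightarrow> real \<Rightarrow> real \<Rightarrow> real" where
  "v_bar L qin hmix = L / (1 / qin - hmix)"

definition rho_bar :: "real \<Rightarrow> real \<Rightarrow> real" where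
  "rho_bar qin vbar = qin / vbar"

definition c1 :: "real \<Rightarrow> real \<Rightarrow> real \<Rightarrow> real" where
  "c1 rho taumix hmix = 1 / (rho ^ 2 * taumix * hmix)"

definition c2 :: "real \<Rightarrow> real" where
  "c2 taumix = 1 / taumix"

definition c3 :: "real \<Rightarrow> real \<Rightarrow> real \<Rightarrow> real \<Rightarrow> real \<Rightarrow> real" where
  "c3 \<alpha> \<tau>acc hacc rho L = \<alpha> / (\<tau>acc * hacc ^ 2) * (1 / rho - L)"

definition c4 :: "real \<Rightarrow> real \<Rightarrow> real" where
  "c4 L hmix = L / hmix"

end

theory Submission
  imports Defs "HOL-Real_Asymp.Real_Asymp"
begin

(* The transport equation
   forces phi(x) = exp (-sigma x / vb), so psi solves a first-order linear ODE whose source decays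
   like exp (-k x) with k = (c2 + sigma) / vb; its solutions are a particular exponential plus
   C exp (sigma x / c4). Combined with the ODE at x = D, the boundary condition at D says
   psi'(D) = 0, which fixes C, and the boundary condition at 0 becomes a scalar characteristic
   equation chi(sigma) = 1. As sigma tends to 0 from the right, chi(sigma) tends to infinity
   (C blows up like 1 / sigma), while chi(sigma) <= L rb^2 c1 / (vb sigma); the intermediate
   value theorem gives a root sigma > 0. *)

lemma convex_combination_pos:
  fixes a x y :: real
  assumes "0 \<le> a" "a \<le> 1" "0 < x" "0 < y"
  shows "0 < a * x + (1 - a) * y"
proof -
  have "a * min x y + (1 - a) * min x y \<le> a * x + (1 - a) * y"
    using assms by (intro add_mono mult_left_mono) auto
  thus ?thesis using assms by (simp add: algebra_simps)
qed

lemma tau_mix_pos: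
  assumes "0 \<le> \<alpha>" "\<alpha> \<le> 1" "0 < \<tau>acc" "0 < \<tau>m"
  shows "0 < tau_mix \<alpha> \<tau>acc \<tau>m"
  using convex_combination_pos[of \<alpha> "1 / \<tau>acc" "1 / \<tau>m"] assms
  by (simp add: tau_mix_def)

lemma h_mix_pos:
  assumes "0 \<le> \<alpha>" "\<alpha> \<le> 1" "0 < \<tau>acc" "0 < \<tau>m" "0 < hm" "0 < hacc"
  shows "0 < h_mix \<alpha> \<tau>acc \<tau>m hm hacc"
  using convex_combination_pos[of \<alpha> 1 "\<tau>acc / \<tau>m"]
    convex_combination_pos[of \<alpha> 1 "\<tau>acc / \<tau>m * (hacc / hm)"] assms
  by (simp add: h_mix_def mult.assoc)

lemma v_bar_pos:
  assumes "0 < L" "0 < qin" "qin * h < 1"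
  shows "0 < v_bar L qin h"
  using assms by (simp add: v_bar_def field_simps)

lemma continuous_blowup_at_right_attains:
  fixes g :: "real \<Rightarrow> real"
  assumes "continuous_on {a<..b} g" "filterlim g at_top (at_right a)" "a < b" "g b \<le> y"
  shows "\<exists>s\<in>{a<..b}. g s = y"
proof -
  have "\<forall>\<^sub>F x in at_right a. y \<le> g x"
    using assms(2) by (simp add: filterlim_at_top)
  moreover have "\<forall>\<^sub>F x in at_right a. x < b"
    using assms(3) by (auto simp: eventually_at_right_field)
  ultimately have "\<forall>\<^sub>F x in at_right a. a < x \<and> x < b \<and> y \<le> g x"
    using eventually_at_right_less by eventually_elim auto
  then obtain x where x: "a < x" "x < b" "y \<le> g x"
    using eventually_happens'[OF trivial_limit_at_right_real] by blast
  have "continuous_on {x..b} g"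
    using assms(1) by (rule continuous_on_subset) (use x in auto)
  then obtain s where "x \<le> s" "s \<le> b" "g s = y"
    using IVT2'[of g b y x] x assms(4) by auto
  thus ?thesis using x by auto
qed

(* The characteristic function chi: for the mode normalised by phi(0) = 1 it equals
   -(L rb^2 / vb) psi(0), with P = L rb^2 c1 / vb. *)
definition mode_characteristic :: "real \<Rightarrow> real \<Rightarrow> real \<Rightarrow> real \<Rightarrow> real \<Rightarrow> real \<Rightarrow> real" where
  "mode_characteristic P c2' c4' vb D \<sigma> =
     P / (\<sigma> + c4' * ((c2' + \<sigma>) / vb)) *
     (1 + c4' * ((c2' + \<sigma>) / vb) / \<sigma> * exp (- ((c2' + \<sigma>) / vb) * D - \<sigma> * D / c4'))"

lemma mode_characteristic_le:
  assumes "0 \<le> P" "0 \<le> c2'" "0 < c4'" "0 < vb" "0 \<le> D" "0 < \<sigma>"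
  shows "mode_characteristic P c2' c4' vb D \<sigma> \<le> P / \<sigma>"
proof -
  define k where "k = (c2' + \<sigma>) / vb"
  have k: "0 < k" using assms by (simp add: k_def)
  have den: "0 < \<sigma> + c4' * k" using assms k by (simp add: add_pos_pos)
  have "0 \<le> k * D" "0 \<le> \<sigma> * D / c4'"
    using assms k by simp_all
  hence "exp (- k * D - \<sigma> * D / c4') \<le> 1"
    by simp
  hence "c4' * k / \<sigma> * exp (- k * D - \<sigma> * D / c4') \<le> c4' * k / \<sigma>"
    by (rule mult_left_le) (use assms k in simp)
  hence "1 + c4' * k / \<sigma> * exp (- k * D - \<sigma> * D / c4') \<le> (\<sigma> + c4' * k) / \<sigma>"
    using assms by (simp add: add_divide_distrib)
  hence "mode_characteristic P c2' c4' vb D \<sigma> \<le> P / (\<sigma> + c4' * k) * ((\<sigma> + c4' * k) / \<sigma>)"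
    unfolding mode_characteristic_def k_def[symmetric] using assms k
    by (intro mult_left_mono) simp_all
  also have "\<dots> = P / \<sigma>"
    using assms den by simp
  finally show ?thesis .
qed

lemma continuous_on_mode_characteristic:
  assumes "0 \<le> c2'" "0 < c4'" "0 < vb"
  shows "continuous_on {0<..} (mode_characteristic P c2' c4' vb D)"
proof -
  have "0 < \<sigma> + c4' * ((c2' + \<sigma>) / vb)" if "0 < \<sigma>" for \<sigma>
    using assms that by (simp add: add_pos_nonneg)
  thus ?thesis
    unfolding mode_characteristic_def
    by (intro continuous_intros) (use assms in \<open>auto simp: less_imp_neq[symmetric]\<close>)
qed

lemma mode_characteristic_at_right_0:
  assumes "0 < P" "0 < c2'" "0 < c4'" "0 < vb" "0 < D"
  shows "filterlim (mode_characteristic P c2' c4' vb D) at_top (at_right 0)"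
  unfolding mode_characteristic_def using assms by real_asymp

lemma mode_characteristic_eq_1:
  assumes "0 < P" "0 < c2'" "0 < c4'" "0 < vb" "0 < D"
  shows "\<exists>\<sigma>>0. mode_characteristic P c2' c4' vb D \<sigma> = 1"
proof -
  have "mode_characteristic P c2' c4' vb D (2 * P) \<le> 1"
    using mode_characteristic_le[of P c2' c4' vb D "2 * P"] assms by simp
  moreover have "continuous_on {0<..2 * P} (mode_characteristic P c2' c4' vb D)"
    by (rule continuous_on_subset[OF continuous_on_mode_characteristic]) (use assms in auto)
  ultimately obtain \<sigma> where "\<sigma> \<in> {0<..2 * P}" "mode_characteristic P c2' c4' vb D \<sigma> = 1"
    using continuous_blowup_at_right_attains mode_characteristic_at_right_0 assms
    by (metis mult_pos_pos zero_less_numeral)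
  thus ?thesis by auto
qed

lemma exp_forced_linear_ode_solution:
  fixes \<sigma> c4' k c C :: real
  assumes "c4' \<noteq> 0" "\<sigma> + c4' * k \<noteq> 0"
  defines "B \<equiv> - c / (\<sigma> + c4' * k)"
  defines "\<psi> \<equiv> \<lambda>x. B * exp (- k * x) + C * exp (\<sigma> * x / c4')"
    and "\<psi>' \<equiv> \<lambda>x. - k * B * exp (- k * x) + \<sigma> / c4' * C * exp (\<sigma> * x / c4')"
  shows "(\<psi> has_real_derivative \<psi>' x) (at x)"
    and "\<sigma> * \<psi> x - c4' * \<psi>' x = - c * exp (- k * x)"
proof -
  show "(\<psi> has_real_derivative \<psi>' x) (at x)"
    unfolding \<psi>_def \<psi>'_def using assms(1) by (auto intro!: derivative_eq_intros)
  have "\<sigma> * \<psi> x - c4' * \<psi>' x = (\<sigma> + c4' * k) * B * exp (- k * x)"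
    using assms(1) by (simp add: \<psi>_def \<psi>'_def field_simps)
  also have "\<dots> = - c * exp (- k * x)"
    using assms(2) by (simp add: B_def)
  finally show "\<sigma> * \<psi> x - c4' * \<psi>' x = - c * exp (- k * x)" .
qed

lemma exp_mode_time_derivative:
  "((\<lambda>s. exp (\<sigma> * s) * a) has_real_derivative \<sigma> * (exp (\<sigma> * t) * a)) (at t within S)"
  by (auto intro!: derivative_eq_intros)

lemma open_loop_mode_profiles:
  fixes L D rb vb c1' c2' c4' :: real
  assumes "0 < L" "0 < D" "0 < rb" "0 < vb" "0 < c1'" "0 < c2'" "0 < c4'"
  obtains \<sigma> \<phi> \<phi>' \<psi> \<psi>' where "0 < \<sigma>" "\<phi> 0 \<noteq> 0"
    "\<And>x. (\<phi> has_real_derivative \<phi>' x) (at x)" "\<And>x. (\<psi> has_real_derivative \<psi>' x) (at x)"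
    "\<And>x. \<sigma> * \<phi> x + vb * \<phi>' x = 0"
    "\<And>x. \<sigma> * \<psi> x - c4' * \<psi>' x = - c1' * exp (- c2' * x / vb) * \<phi> x"
    "\<phi> 0 = - L * rb ^ 2 / vb * \<psi> 0" "\<psi>' D = 0"
proof -
  obtain \<sigma> where "0 < \<sigma>" and char: "mode_characteristic (L * rb ^ 2 / vb * c1') c2' c4' vb D \<sigma> = 1"
    using mode_characteristic_eq_1[of "L * rb ^ 2 / vb * c1'" c2' c4' vb D] assms by auto
  define k where "k = (c2' + \<sigma>) / vb"
  define B where "B = - c1' / (\<sigma> + c4' * k)"
  define C where "C = c4' * k / \<sigma> * B * exp (- k * D - \<sigma> * D / c4')"
  define \<phi> where "\<phi> = (\<lambda>x::real. exp (- \<sigma> * x / vb))"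
  define \<psi> where "\<psi> = (\<lambda>x. B * exp (- k * x) + C * exp (\<sigma> * x / c4'))"
  define \<psi>' where "\<psi>' = (\<lambda>x. - k * B * exp (- k * x) + \<sigma> / c4' * C * exp (\<sigma> * x / c4'))"
  have "0 < k" using \<open>0 < \<sigma>\<close> assms by (simp add: k_def)
  hence den: "0 < \<sigma> + c4' * k" using \<open>0 < \<sigma>\<close> assms by (simp add: add_pos_pos)
  have "(\<phi> has_real_derivative - \<sigma> / vb * \<phi> x) (at x)" for x
    unfolding \<phi>_def using assms by (auto intro!: derivative_eq_intros)
  moreover have "\<sigma> * \<phi> x + vb * (- \<sigma> / vb * \<phi> x) = 0" for x
    using assms by simp
  moreover have "(\<psi> has_real_derivative \<psi>' x) (at x)" for x
    using exp_forced_linear_ode_solution(1)[where c = c1'] den assms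
    by (simp add: \<psi>_def \<psi>'_def B_def)
  moreover have "\<sigma> * \<psi> x - c4' * \<psi>' x = - c1' * exp (- c2' * x / vb) * \<phi> x" for x
  proof -
    have "exp (- c2' * x / vb) * \<phi> x = exp (- k * x)"
      unfolding \<phi>_def k_def using assms by (simp flip: exp_add) (simp add: field_simps)
    thus ?thesis
      using exp_forced_linear_ode_solution(2)[where c = c1'] den assms
      by (simp add: \<psi>_def \<psi>'_def B_def)
  qed
  moreover have "\<psi>' D = 0"
    using \<open>0 < \<sigma>\<close> assms by (simp add: \<psi>'_def C_def mult.assoc flip: exp_add)
  moreover have "\<phi> 0 = - L * rb ^ 2 / vb * \<psi> 0"
  proof -
    have "\<psi> 0 = B * (1 + c4' * k / \<sigma> * exp (- k * D - \<sigma> * D / c4'))"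
      by (simp add: \<psi>_def C_def algebra_simps)
    hence "- L * rb ^ 2 / vb * \<psi> 0 = mode_characteristic (L * rb ^ 2 / vb * c1') c2' c4' vb D \<sigma>"
      by (simp add: B_def mode_characteristic_def flip: k_def)
    thus ?thesis
      using char by (simp add: \<phi>_def)
  qed
  moreover have "\<phi> 0 \<noteq> 0"
    by (simp add: \<phi>_def)
  ultimately show ?thesis
    using that[of \<sigma> \<phi> "\<lambda>x. - \<sigma> / vb * \<phi> x" \<psi> \<psi>'] \<open>0 < \<sigma>\<close> by blast
qed

lemma open_loop_exponential_mode:
  fixes L D rb vb c1' c2' c4' :: real
  assumes "0 < L" "0 < D" "0 < rb" "0 < vb" "0 < c1'" "0 < c2'" "0 < c4'"
  shows "\<exists>\<sigma>::real. \<sigma> > 0 \<and> (\<exists>\<phi> \<psi> :: real \<Rightarrow> real.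
     (\<exists>x\<in>{0..D}. \<phi> x \<noteq> 0 \<or> \<psi> x \<noteq> 0) \<and>
     continuous_on {0..D} \<phi> \<and> continuous_on {0..D} \<psi> \<and>
     (\<forall>x\<in>{0<..<D}. \<forall>t\<ge>0. \<exists>zt zx vt vx.
        ((\<lambda>s. exp (\<sigma> * s) * \<phi> x) has_real_derivative zt) (at t within {0..}) \<and>
        ((\<lambda>y. exp (\<sigma> * t) * \<phi> y) has_real_derivative zx) (at x) \<and>
        ((\<lambda>s. exp (\<sigma> * s) * \<psi> x) has_real_derivative vt) (at t within {0..}) \<and>
        ((\<lambda>y. exp (\<sigma> * t) * \<psi> y) has_real_derivative vx) (at x) \<and>
        zt + vb * zx = 0 \<and>
        vt - c4' * vx = - c1' * exp (- c2' * x / vb) * (exp (\<sigma> * t) * \<phi> x)) \<and>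
     (\<forall>t\<ge>0. exp (\<sigma> * t) * \<phi> 0 = - L * rb ^ 2 / vb * (exp (\<sigma> * t) * \<psi> 0)) \<and>
     (\<forall>t\<ge>0. \<exists>vt.
        ((\<lambda>s. exp (\<sigma> * s) * \<psi> D) has_real_derivative vt) (at t within {0..}) \<and>
        vt = - c1' * exp (- c2' * D / vb) * (exp (\<sigma> * t) * \<phi> D)))"
proof -
  obtain \<sigma> \<phi> \<phi>' \<psi> \<psi>' where "0 < \<sigma>" "\<phi> 0 \<noteq> 0"
    and \<phi>_deriv: "\<And>x. (\<phi> has_real_derivative \<phi>' x) (at x)"
    and \<psi>_deriv: "\<And>x. (\<psi> has_real_derivative \<psi>' x) (at x)"
    and transport: "\<And>x. \<sigma> * \<phi> x + vb * \<phi>' x = 0"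
    and \<psi>_ode: "\<And>x. \<sigma> * \<psi> x - c4' * \<psi>' x = - c1' * exp (- c2' * x / vb) * \<phi> x"
    and bc0: "\<phi> 0 = - L * rb ^ 2 / vb * \<psi> 0" and "\<psi>' D = 0"
    using open_loop_mode_profiles[OF assms] by blast
  have bcD: "\<sigma> * \<psi> D = - c1' * exp (- c2' * D / vb) * \<phi> D"
    using \<psi>_ode[of D] \<open>\<psi>' D = 0\<close> by simp
  show ?thesis
  proof (intro exI conjI ballI allI impI)
    show "0 < \<sigma>" by fact
    show "\<exists>x\<in>{0..D}. \<phi> x \<noteq> 0 \<or> \<psi> x \<noteq> 0"
      using assms \<open>\<phi> 0 \<noteq> 0\<close> by auto
    show "continuous_on {0..D} \<phi>" "continuous_on {0..D} \<psi>"
      using \<phi>_deriv \<psi>_deriv by (meson DERIV_isCont continuous_at_imp_continuous_on)+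
    fix t :: real
    show "exp (\<sigma> * t) * \<phi> 0 = - L * rb ^ 2 / vb * (exp (\<sigma> * t) * \<psi> 0)"
      using bc0 by simp
    show "((\<lambda>s. exp (\<sigma> * s) * \<psi> D) has_real_derivative \<sigma> * (exp (\<sigma> * t) * \<psi> D)) (at t within {0..})"
      by (rule exp_mode_time_derivative)
    show "\<sigma> * (exp (\<sigma> * t) * \<psi> D) = - c1' * exp (- c2' * D / vb) * (exp (\<sigma> * t) * \<phi> D)"
      using arg_cong[OF bcD, of "(*) (exp (\<sigma> * t))"] by (simp add: algebra_simps)
    fix x :: real
    show "((\<lambda>s. exp (\<sigma> * s) * \<phi> x) has_real_derivative \<sigma> * (exp (\<sigma> * t) * \<phi> x)) (at t within {0..})"
      "((\<lambda>s. exp (\<sigma> * s) * \<psi> x) has_real_derivative \<sigma> * (exp (\<sigma> * t) * \<psi> x)) (at t within {0..})"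
      by (rule exp_mode_time_derivative)+
    show "((\<lambda>y. exp (\<sigma> * t) * \<phi> y) has_real_derivative exp (\<sigma> * t) * \<phi>' x) (at x)"
      "((\<lambda>y. exp (\<sigma> * t) * \<psi> y) has_real_derivative exp (\<sigma> * t) * \<psi>' x) (at x)"
      by (intro DERIV_cmult \<phi>_deriv \<psi>_deriv)+
    show "\<sigma> * (exp (\<sigma> * t) * \<phi> x) + vb * (exp (\<sigma> * t) * \<phi>' x) = 0"
      using arg_cong[OF transport[of x], of "(*) (exp (\<sigma> * t))"] by (simp add: algebra_simps)
    show "\<sigma> * (exp (\<sigma> * t) * \<psi> x) - c4' * (exp (\<sigma> * t) * \<psi>' x)
        = - c1' * exp (- c2' * x / vb) * (exp (\<sigma> * t) * \<phi> x)"
      using arg_cong[OF \<psi>_ode[of x], of "(*) (exp (\<sigma> * t))"] by (simp add: algebra_simps)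
  qed
qed

theorem proposition1:
  fixes L D \<alpha> \<tau>acc \<tau>m hm hacc qin :: real
  assumes "L > 0" and "D > 0" and "0 \<le> \<alpha>" and "\<alpha> \<le> 1"
    and "\<tau>acc > 0" and "\<tau>m > 0" and "hm > 0" and "hacc > 0"
    and "qin > 0" and "qin * h_mix \<alpha> \<tau>acc \<tau>m hm hacc < 1"
  defines "tmix \<equiv> tau_mix \<alpha> \<tau>acc \<tau>m"
    and "hmx \<equiv> h_mix \<alpha> \<tau>acc \<tau>m hm hacc"
    and "vb \<equiv> v_bar L qin (h_mix \<alpha> \<tau>acc \<tau>m hm hacc)"
    and "rb \<equiv> rho_bar qin (v_bar L qin (h_mix \<alpha> \<tau>acc \<tau>m hm hacc))"
  shows "\<exists>\<sigma>::real. \<sigma> > 0 \<and> (\<exists>\<phi> \<psi> :: real \<Rightarrow> real.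
     (\<exists>x\<in>{0..D}. \<phi> x \<noteq> 0 \<or> \<psi> x \<noteq> 0) \<and>
     continuous_on {0..D} \<phi> \<and> continuous_on {0..D} \<psi> \<and>
     (\<forall>x\<in>{0<..<D}. \<forall>t\<ge>0. \<exists>zt zx vt vx.
        ((\<lambda>s. exp (\<sigma> * s) * \<phi> x) has_real_derivative zt) (at t within {0..}) \<and>
        ((\<lambda>y. exp (\<sigma> * t) * \<phi> y) has_real_derivative zx) (at x) \<and>
        ((\<lambda>s. exp (\<sigma> * s) * \<psi> x) has_real_derivative vt) (at t within {0..}) \<and>
        ((\<lambda>y. exp (\<sigma> * t) * \<psi> y) has_real_derivative vx) (at x) \<and>
        zt + vb * zx = 0 \<and>
        vt - c4 L hmx * vx = - c1 rb tmix hmx * exp (- c2 tmix * x / vb) * (exp (\<sigma> * t) * \<phi> x)) \<and>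
     (\<forall>t\<ge>0. exp (\<sigma> * t) * \<phi> 0 = - L * rb ^ 2 / vb * (exp (\<sigma> * t) * \<psi> 0)) \<and>
     (\<forall>t\<ge>0. \<exists>vt.
        ((\<lambda>s. exp (\<sigma> * s) * \<psi> D) has_real_derivative vt) (at t within {0..}) \<and>
        vt = - c1 rb tmix hmx * exp (- c2 tmix * D / vb) * (exp (\<sigma> * t) * \<phi> D)))"
proof -
  have tmix: "0 < tmix" and hmx: "0 < hmx"
    using tau_mix_pos h_mix_pos assms(3-8) unfolding tmix_def hmx_def by auto
  have vb: "0 < vb"
    using v_bar_pos assms(1,9,10) unfolding vb_def by auto
  have rb: "0 < rb"
    using vb assms(9) by (simp add: rb_def rho_bar_def flip: vb_def)
  have "0 < c1 rb tmix hmx" "0 < c2 tmix" "0 < c4 L hmx"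
    using rb tmix hmx assms(1) by (simp_all add: c1_def c2_def c4_def)
  thus ?thesis
    by (rule open_loop_exponential_mode[OF assms(1,2) rb vb])
qed

end
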